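(* Let $d(z)=\sum_{k\ge0}d_kz^{-k-1}$ be a formal Laurent series and $P(z)=\sum_{\alpha=0}^{m} c_{\alpha,1}z^\alpha$, $Q(z)=\sum_{\alpha=0}^{m} c_{\alpha,0}z^\alpha$ complex polynomials with $c_{m,1}\ne0$, $m\ge1$, $\deg Q<m$. Suppose that the initial data are $\varphi(x,y)=\operatorname{Res}\{d(\xi)(Q(\xi)/P(\xi))^y\xi^x\}$ for $(x,y)\in\mathbb Z_+^2$ with $x<m$ or $y=0$ (with $Q/P$ expanded at $\xi=\infty$). Define $\Phi_k(w)=\sum_{y\ge1}\varphi(k,y)w^{-y-1}$ for $0\le k\le m-1$ and $R_{k+1}(z,w)=z^{-k-1}\sum_{\alpha=k+1}^{m}(c_{\alpha,1}w-c_{\alpha,0})z^\alpha$. Then $$\sum_{k=0}^{m-1}R_{k+1}(z,w)\Phi_k(w)-\frac1w\sum_{\alpha=0}^{m-1}\sum_{x=0}^{\alpha-1}c_{\alpha,0}\,\varphi(x,0)\,z^{\alpha-x-1}=0,$$ so that the generating function of the solution of the Cauchy problem is $\mathcal D(z,w)=\dfrac{P(z)d(z)}{P(z)w-Q(z)}$.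
   Context: $\mathbb Z_+$ denotes the nonnegative integers; $\operatorname{Res}$ of a formal Laurent series in $\xi$ is its coefficient of $\xi^{-1}$. The Cauchy problem is: $\sum_{\alpha=0}^{m} c_{\alpha,1} r(x+\alpha,y+1)-\sum_{\alpha=0}^{m} c_{\alpha,0} r(x+\alpha,y)=0$ for all $x,y\ge0$, and $r(x,y)=\varphi(x,y)$ whenever $x<m$ or $y=0$; $\mathcal D(z,w)=\sum_{(x,y)\in\mathbb Z_+^2}r(x,y)z^{-x-1}w^{-y-1}$. *)

theory Defs
  imports "HOL-Computational_Algebra.Formal_Laurent_Series"
begin

text \<open>A formal Laurent series in a variable u expanded at u = infinity
(finitely many positive powers of u, possibly infinitely many negative ones) is
represented as an element of type complex fls in the variable t = 1/u.  Thus
u = fls_X_inv and u^(-1) = fls_X.  Series in two variables z and w, expanded at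
z = infinity and w = infinity, are represented in complex fls fls: the outer
variable is 1/w, the inner one is 1/z.\<close>

definition zvar :: "complex fls" where
  "zvar = fls_X_inv"

definition polz :: "(nat \<Rightarrow> complex) \<Rightarrow> nat \<Rightarrow> complex fls" where
  "polz c m = (\<Sum>\<alpha>\<le>m. fls_const (c \<alpha>) * zvar ^ \<alpha>)"

text \<open>d(xi) = sum_{k>=0} d_k xi^(-k-1).\<close>
definition dser :: "(nat \<Rightarrow> complex) \<Rightarrow> complex fls" where
  "dser d = fls_shift (-1) (fps_to_fls (Abs_fps d))"

text \<open>Res: coefficient of xi^(-1), i.e. of the first power of 1/xi.\<close>
definition Res :: "complex fls \<Rightarrow> complex" where
  "Res f = fls_nth f 1"

definition phi :: "(nat \<Rightarrow> complex) \<Rightarrow> (nat \<Rightarrow> complex) \<Rightarrow> nat \<Rightarrow> (nat \<Rightarrow> complex)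
                    \<Rightarrow> nat \<Rightarrow> nat \<Rightarrow> complex" where
  "phi c1 c0 m d x y = Res (dser d * (polz c0 m / polz c1 m) ^ y * zvar ^ x)"

definition Z :: "complex fls fls" where
  "Z = fls_const zvar"

definition W :: "complex fls fls" where
  "W = fls_X_inv"

definition cst :: "complex \<Rightarrow> complex fls fls" where
  "cst a = fls_const (fls_const a)"

text \<open>Phi_k(w) = sum_{y>=1} phi(k,y) w^(-y-1) (coefficients given by a function f k y).\<close>
definition Phi :: "(nat \<Rightarrow> nat \<Rightarrow> complex) \<Rightarrow> nat \<Rightarrow> complex fls fls" where
  "Phi f k = fps_to_fls (Abs_fps (\<lambda>n. if 2 \<le> n then fls_const (f k (n - 1)) else 0))"

definition Rk :: "(nat \<Rightarrow> complex) \<Rightarrow> (nat \<Rightarrow> complex) \<Rightarrow> nat \<Rightarrow> nat \<Rightarrow> complex fls fls" where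
  "Rk c1 c0 m k = (\<Sum>\<alpha>\<in>{k+1..m}. (cst (c1 \<alpha>) * W - cst (c0 \<alpha>)) * Z ^ (\<alpha> - k - 1))"

definition cauchy_sol :: "(nat \<Rightarrow> complex) \<Rightarrow> (nat \<Rightarrow> complex) \<Rightarrow> nat
                          \<Rightarrow> (nat \<Rightarrow> nat \<Rightarrow> complex) \<Rightarrow> (nat \<Rightarrow> nat \<Rightarrow> complex) \<Rightarrow> bool" where
  "cauchy_sol c1 c0 m phi0 r \<longleftrightarrow>
     (\<forall>x y. (\<Sum>\<alpha>\<le>m. c1 \<alpha> * r (x + \<alpha>) (y + 1)) - (\<Sum>\<alpha>\<le>m. c0 \<alpha> * r (x + \<alpha>) y) = 0) \<and>
     (\<forall>x y. (x < m \<or> y = 0) \<longrightarrow> r x y = phi0 x y)"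

text \<open>D(z,w) = sum_{x,y} r(x,y) z^(-x-1) w^(-y-1).\<close>
definition genD :: "(nat \<Rightarrow> nat \<Rightarrow> complex) \<Rightarrow> complex fls fls" where
  "genD r = fls_shift (-1) (fps_to_fls (Abs_fps (\<lambda>y.
              fls_shift (-1) (fps_to_fls (Abs_fps (\<lambda>x. r x y))))))"

end

theory Submission
  imports Defs
begin

text \<open>Write \<open>U = Q/P\<close>, a series in \<open>1/\<xi>\<close> without constant term because \<open>deg Q < m = deg P\<close>.
  The initial data \<open>\<phi>(x,y) = Res (d U^y \<xi>^x)\<close> solve the recurrence everywhere, since the
  recurrence at \<open>(x,y)\<close> reads \<open>Res (d U^y \<xi>^x (U P - Q)) = 0\<close>. As \<open>c_{m,1} \<noteq> 0\<close> the Cauchy problem has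
  at most one solution, so the solution is \<open>\<phi>\<close>, with generating function
  \<open>\<Sum>_y d(z) U(z)^y w^(-y-1) = d/(w - U) = P d/(P w - Q)\<close>.
  For the identity, the coefficient of \<open>w^(-y) z^j\<close> of its left-hand side is \<open>Res (d U^(y-1) E_j)\<close> with
  \<open>E_j = \<Sum>_{\<alpha>>j} (c_{\<alpha>,1} U - c_{\<alpha>,0}) \<xi>^(\<alpha>-j-1)\<close>. Since \<open>\<Sum>_\<alpha> (c_{\<alpha>,1} U - c_{\<alpha>,0}) \<xi>^\<alpha> = U P - Q = 0\<close>,
  \<open>E_j\<close> is minus the complementary lower part, which is \<open>O(1/\<xi>)\<close>; hence \<open>d U^(y-1) E_j = O(1/\<xi>^2)\<close>
  has no residue.\<close>

unbundle fps_syntax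

definition fls_vanishes_below :: "'a::zero fls \<Rightarrow> int \<Rightarrow> bool" where
  "fls_vanishes_below f k \<longleftrightarrow> (\<forall>i<k. f $$ i = 0)"

lemma fls_vanishes_below_mono: "fls_vanishes_below f a \<Longrightarrow> b \<le> a \<Longrightarrow> fls_vanishes_below f b"
  by (auto simp: fls_vanishes_below_def)

lemma fls_vanishes_below_diff:
  "fls_vanishes_below (f::'a::ab_group_add fls) a \<Longrightarrow> fls_vanishes_below g a \<Longrightarrow> fls_vanishes_below (f - g) a"
  by (auto simp: fls_vanishes_below_def)

lemma fls_vanishes_below_uminus:
  "fls_vanishes_below (f::'a::ab_group_add fls) a \<Longrightarrow> fls_vanishes_below (- f) a"
  by (auto simp: fls_vanishes_below_def)

lemma fls_vanishes_below_sum: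
  "(\<And>x. x \<in> A \<Longrightarrow> fls_vanishes_below (f x) a) \<Longrightarrow> fls_vanishes_below (\<Sum>x\<in>A. f x) a"
  by (auto simp: fls_vanishes_below_def fls_nth_sum)

lemma fls_vanishes_below_const_mult:
  "fls_vanishes_below f a \<Longrightarrow> fls_vanishes_below (fls_const (c::'a::{comm_monoid_add,mult_zero}) * f) a"
  by (auto simp: fls_vanishes_below_def)

lemma fls_vanishes_below_mult:
  fixes f g :: "'a::{comm_monoid_add,mult_zero} fls"
  assumes "fls_vanishes_below f a" "fls_vanishes_below g b"
  shows "fls_vanishes_below (f * g) (a + b)"
proof (cases "f = 0 \<or> g = 0")
  case True
  thus ?thesis by (auto simp: fls_vanishes_below_def)
next
  case False
  have "a \<le> fls_subdegree f" "b \<le> fls_subdegree g"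
    using False assms by (auto intro!: fls_subdegree_geI simp: fls_vanishes_below_def)
  thus ?thesis by (auto simp: fls_vanishes_below_def intro!: fls_times_nth_eq0)
qed

lemma fls_vanishes_below_power:
  "fls_vanishes_below (f::'a::comm_semiring_1 fls) a \<Longrightarrow> fls_vanishes_below (f ^ n) (int n * a)"
proof (induction n)
  case 0
  thus ?case by (auto simp: fls_vanishes_below_def)
next
  case (Suc n)
  have "fls_vanishes_below (f * f ^ n) (a + int n * a)"
    using Suc by (intro fls_vanishes_below_mult) auto
  thus ?case by (simp add: algebra_simps)
qed

lemma fls_vanishes_below_zvar_power: "fls_vanishes_below (zvar ^ n) (- int n)"
  by (auto simp: fls_vanishes_below_def zvar_def)

lemma fls_vanishes_below_zvar_power_mult_cancel:
  assumes "fls_vanishes_below (zvar ^ n * f) (k - int n)"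
  shows "fls_vanishes_below f k"
  unfolding fls_vanishes_below_def
proof (intro allI impI)
  fix i assume "i < k"
  hence "(zvar ^ n * f) $$ (i - int n) = 0"
    using assms by (auto simp: fls_vanishes_below_def)
  thus "f $$ i = 0"
    by (simp add: zvar_def fls_X_inv_power_times_conv_shift(1))
qed

lemma polz_nth: "polz c m $$ i = (if - int m \<le> i \<and> i \<le> 0 then c (nat (- i)) else 0)"
proof -
  have "polz c m $$ i = (\<Sum>\<alpha>\<le>m. if \<alpha> = nat (- i) \<and> i \<le> 0 then c \<alpha> else 0)"
    unfolding polz_def zvar_def fls_nth_sum by (intro sum.cong) auto
  also have "\<dots> = (if - int m \<le> i \<and> i \<le> 0 then c (nat (- i)) else 0)"
    by (cases "i \<le> 0") (auto simp: sum.delta)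
  finally show ?thesis .
qed

lemma polz_nonzero: "c m \<noteq> 0 \<Longrightarrow> polz c m \<noteq> 0"
  using polz_nth[of c m "- int m"] by auto

lemma polz_divide_polz_vanishes_below:
  assumes "c1 m \<noteq> 0" "c0 m = 0"
  shows "fls_vanishes_below (polz c0 m / polz c1 m) 1"
proof (cases "polz c0 m = 0")
  case True
  thus ?thesis by (auto simp: fls_vanishes_below_def)
next
  case False
  have "fls_subdegree (polz c1 m) = - int m"
    using assms by (intro fls_subdegree_eqI) (auto simp: polz_nth)
  moreover have "1 - int m \<le> fls_subdegree (polz c0 m)"
    using assms False by (intro fls_subdegree_geI) (auto simp: polz_nth antisym_conv1)
  ultimately have "1 \<le> fls_subdegree (polz c0 m / polz c1 m)"
    using fls_divide_subdegree[OF False polz_nonzero[of c1 m, OF assms(1)]] by simp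
  thus ?thesis by (auto simp: fls_vanishes_below_def)
qed

lemma Res_mult_zvar_power: "Res (f * zvar ^ x) = f $$ (1 + int x)"
  unfolding Res_def zvar_def fls_X_inv_power_times_conv_shift(2) fls_shift_nth
  by (simp add: add.commute)

lemma sum_mult_Res:
  "(\<Sum>\<alpha>\<in>A. c \<alpha> * Res (f * g \<alpha>)) = Res (f * (\<Sum>\<alpha>\<in>A. fls_const (c \<alpha>) * g \<alpha>))"
proof -
  have "f * (\<Sum>\<alpha>\<in>A. fls_const (c \<alpha>) * g \<alpha>) = (\<Sum>\<alpha>\<in>A. fls_const (c \<alpha>) * (f * g \<alpha>))"
    by (simp add: sum_distrib_left mult.left_commute)
  thus ?thesis by (simp add: Res_def fls_nth_sum)
qed

lemma phi_eq_nth: "phi c1 c0 m d x y = (dser d * (polz c0 m / polz c1 m) ^ y) $$ (1 + int x)"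
  by (simp add: phi_def Res_mult_zvar_power)

lemma phi_recurrence:
  assumes "c1 m \<noteq> 0"
  shows "(\<Sum>\<alpha>\<le>m. c1 \<alpha> * phi c1 c0 m d (x + \<alpha>) (y + 1))
         - (\<Sum>\<alpha>\<le>m. c0 \<alpha> * phi c1 c0 m d (x + \<alpha>) y) = 0"
proof -
  define U where "U = polz c0 m / polz c1 m"
  define F where "F = dser d * U ^ y * zvar ^ x"
  have "U * polz c1 m = polz c0 m"
    using polz_nonzero[of c1 m, OF assms] by (simp add: U_def)
  have shift1: "phi c1 c0 m d (x + \<alpha>) (y + 1) = Res ((F * U) * zvar ^ \<alpha>)"
    and shift0: "phi c1 c0 m d (x + \<alpha>) y = Res (F * zvar ^ \<alpha>)" for \<alpha>
    by (simp_all add: phi_def U_def F_def power_add mult.assoc mult.commute mult.left_commute)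
  have "(\<Sum>\<alpha>\<le>m. c1 \<alpha> * phi c1 c0 m d (x + \<alpha>) (y + 1)) = Res ((F * U) * polz c1 m)"
    unfolding shift1 sum_mult_Res polz_def ..
  also have "\<dots> = Res (F * polz c0 m)"
    using \<open>U * polz c1 m = polz c0 m\<close> by (simp add: mult.assoc)
  also have "\<dots> = (\<Sum>\<alpha>\<le>m. c0 \<alpha> * phi c1 c0 m d (x + \<alpha>) y)"
    unfolding shift0 sum_mult_Res polz_def ..
  finally show ?thesis by simp
qed

lemma cauchy_sol_phi: "c1 m \<noteq> 0 \<Longrightarrow> cauchy_sol c1 c0 m (phi c1 c0 m d) (phi c1 c0 m d)"
  unfolding cauchy_sol_def using phi_recurrence by blast

lemma cauchy_sol_leading_term:
  assumes "cauchy_sol c1 c0 m p r"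
  shows "c1 m * r (x + m) (y + 1)
         = (\<Sum>\<alpha>\<le>m. c0 \<alpha> * r (x + \<alpha>) y) - (\<Sum>\<alpha><m. c1 \<alpha> * r (x + \<alpha>) (y + 1))"
proof -
  have "{..m} = insert m {..<m}" by auto
  hence "(\<Sum>\<alpha>\<le>m. c1 \<alpha> * r (x + \<alpha>) (y + 1))
         = c1 m * r (x + m) (y + 1) + (\<Sum>\<alpha><m. c1 \<alpha> * r (x + \<alpha>) (y + 1))"
    by simp
  moreover have "(\<Sum>\<alpha>\<le>m. c1 \<alpha> * r (x + \<alpha>) (y + 1)) = (\<Sum>\<alpha>\<le>m. c0 \<alpha> * r (x + \<alpha>) y)"
    using assms unfolding cauchy_sol_def by auto
  ultimately show ?thesis
    by (simp only: eq_diff_eq)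
qed

lemma cauchy_sol_unique:
  assumes r: "cauchy_sol c1 c0 m p r" and s: "cauchy_sol c1 c0 m p s" and "c1 m \<noteq> 0"
  shows "r x y = s x y"
proof (induction y arbitrary: x)
  case 0
  thus ?case using r s by (simp add: cauchy_sol_def)
next
  case (Suc y)
  show ?case
  proof (induction x rule: less_induct)
    case (less x)
    show ?case
    proof (cases "x < m")
      case True
      thus ?thesis using r s by (simp add: cauchy_sol_def)
    next
      case False
      define x' where "x' = x - m"
      have x: "x = x' + m" using False by (simp add: x'_def)
      have "(\<Sum>\<alpha><m. c1 \<alpha> * r (x' + \<alpha>) (y + 1)) = (\<Sum>\<alpha><m. c1 \<alpha> * s (x' + \<alpha>) (y + 1))"
        using less x by (intro sum.cong) auto
      moreover have "(\<Sum>\<alpha>\<le>m. c0 \<alpha> * r (x' + \<alpha>) y) = (\<Sum>\<alpha>\<le>m. c0 \<alpha> * s (x' + \<alpha>) y)"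
        using Suc.IH by (intro sum.cong) auto
      ultimately have "c1 m * r (x' + m) (y + 1) = c1 m * s (x' + m) (y + 1)"
        unfolding cauchy_sol_leading_term[OF r] cauchy_sol_leading_term[OF s] by (rule arg_cong2)
      hence "c1 m * r x (Suc y) = c1 m * s x (Suc y)"
        by (simp add: x)
      thus ?thesis using \<open>c1 m \<noteq> 0\<close> by simp
    qed
  qed
qed

lemma genD_nth:
  "genD r $$ n = (if 1 \<le> n then fls_shift (-1) (fps_to_fls (Abs_fps (\<lambda>x. r x (nat n - 1)))) else 0)"
  by (simp add: genD_def nat_diff_distrib)

lemma dser_mult_power_vanishes_below:
  assumes "fls_vanishes_below U 1"
  shows "fls_vanishes_below (dser d * U ^ y) 1"
  using fls_vanishes_below_mult[OF _ fls_vanishes_below_power[OF assms, of y], of "dser d" 1]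
  by (auto simp: fls_vanishes_below_def dser_def)

lemma genD_phi_nth:
  assumes "c1 m \<noteq> 0" "c0 m = 0"
  shows "genD (phi c1 c0 m d) $$ n = (if 1 \<le> n then dser d * (polz c0 m / polz c1 m) ^ (nat n - 1) else 0)"
proof -
  have "fls_shift (-1) (fps_to_fls (Abs_fps (\<lambda>x. phi c1 c0 m d x y))) = dser d * (polz c0 m / polz c1 m) ^ y"
    for y
  proof (rule fls_eqI)
    fix i
    show "fls_shift (-1) (fps_to_fls (Abs_fps (\<lambda>x. phi c1 c0 m d x y))) $$ i
          = (dser d * (polz c0 m / polz c1 m) ^ y) $$ i"
      using dser_mult_power_vanishes_below[OF polz_divide_polz_vanishes_below[of c1 m c0, OF assms]]
      by (cases "i < 1") (auto simp: phi_eq_nth fls_vanishes_below_def)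
  qed
  thus ?thesis by (simp add: genD_nth)
qed

text \<open>Coefficientwise in \<open>w\<close>, \<open>(P w - Q) \<Sum>_y d U^y w^(-y-1)\<close> telescopes since \<open>P U = Q\<close>.\<close>

lemma genD_phi_mult:
  assumes "c1 m \<noteq> 0" "c0 m = 0"
  shows "genD (phi c1 c0 m d) * (fls_const (polz c1 m) * W - fls_const (polz c0 m))
         = fls_const (polz c1 m * dser d)"
proof -
  define U where "U = polz c0 m / polz c1 m"
  define g where "g = genD (phi c1 c0 m d)"
  have UP: "U * polz c1 m = polz c0 m"
    using polz_nonzero[of c1 m, OF assms(1)] by (simp add: U_def)
  have g_nth: "g $$ n = (if 1 \<le> n then dser d * U ^ (nat n - 1) else 0)" for n
    unfolding g_def U_def by (rule genD_phi_nth[of c1 m c0, OF assms])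
  have "g * (fls_const (polz c1 m) * W - fls_const (polz c0 m))
        = fls_const (polz c1 m) * fls_shift 1 g - fls_const (polz c0 m) * g"
    by (simp add: W_def fls_X_inv_times_conv_shift(1)[symmetric] algebra_simps)
  also have "\<dots> = fls_const (polz c1 m * dser d)"
  proof (rule fls_eqI)
    fix n :: int
    consider "n < 0" | "n = 0" | k where "n = int (Suc k)"
      by (cases n rule: int_cases3) (auto dest: gr0_implies_Suc)
    thus "(fls_const (polz c1 m) * fls_shift 1 g - fls_const (polz c0 m) * g) $$ n
          = fls_const (polz c1 m * dser d) $$ n"
    proof cases
      case 3
      have "polz c1 m * (dser d * U ^ Suc k) = polz c0 m * (dser d * U ^ k)"
        by (simp add: UP[symmetric] algebra_simps)
      thus ?thesis using 3 by (simp add: g_nth nat_add_distrib)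
    qed (auto simp: g_nth)
  qed
  finally show ?thesis unfolding g_def .
qed

lemma genD_cauchy_sol:
  assumes "c1 m \<noteq> 0" "c0 m = 0" "cauchy_sol c1 c0 m (phi c1 c0 m d) r"
  shows "genD r = fls_const (polz c1 m) * fls_const (dser d)
                  / (fls_const (polz c1 m) * W - fls_const (polz c0 m))"
proof -
  define E where "E = fls_const (polz c1 m) * W - fls_const (polz c0 m)"
  have "E $$ (-1) = polz c1 m"
    by (simp add: E_def W_def)
  hence "E \<noteq> 0"
    using polz_nonzero[of c1 m, OF assms(1)] by force
  have "r = phi c1 c0 m d"
    using cauchy_sol_unique[OF assms(3) cauchy_sol_phi[of c1 m c0 d, OF assms(1)] assms(1)] by blast
  hence "genD r * E = fls_const (polz c1 m) * fls_const (dser d)"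
    using genD_phi_mult[of c1 m c0 d, OF assms(1,2)] by (simp add: E_def)
  thus ?thesis
    unfolding E_def[symmetric] using nonzero_eq_divide_eq[OF \<open>E \<noteq> 0\<close>] by blast
qed

definition polz_tail :: "(nat \<Rightarrow> complex) \<Rightarrow> nat \<Rightarrow> nat \<Rightarrow> complex fls" where
  "polz_tail c m k = (\<Sum>\<alpha>\<in>{k+1..m}. fls_const (c \<alpha>) * zvar ^ (\<alpha> - k - 1))"

lemma fls_const_sum: "fls_const (\<Sum>x\<in>A. f x) = (\<Sum>x\<in>A. fls_const (f x))"
  by (rule fls_eqI) (simp add: fls_nth_sum)

lemma Rk_eq_polz_tail: "Rk c1 c0 m k = W * fls_const (polz_tail c1 m k) - fls_const (polz_tail c0 m k)"
proof -
  have "W * fls_const (polz_tail c1 m k) - fls_const (polz_tail c0 m k) =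
     (\<Sum>\<alpha>\<in>{k+1..m}. W * fls_const (fls_const (c1 \<alpha>) * zvar ^ (\<alpha> - k - 1))
                     - fls_const (fls_const (c0 \<alpha>) * zvar ^ (\<alpha> - k - 1)))"
    unfolding polz_tail_def fls_const_sum sum_distrib_left sum_subtractf ..
  also have "\<dots> = Rk c1 c0 m k"
    unfolding Rk_def
    by (intro sum.cong refl) (simp add: cst_def Z_def fls_const_power[symmetric] algebra_simps)
  finally show ?thesis by simp
qed

lemma polz_tail_nth:
  "polz_tail c m k $$ i = (if i \<le> 0 \<and> nat (- i) + k + 1 \<le> m then c (nat (- i) + k + 1) else 0)"
proof -
  have "polz_tail c m k $$ i = (\<Sum>\<alpha>\<in>{k+1..m}. if \<alpha> = nat (- i) + k + 1 \<and> i \<le> 0 then c \<alpha> else 0)"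
    unfolding polz_tail_def fls_nth_sum zvar_def by (intro sum.cong refl) auto
  also have "\<dots> = (if i \<le> 0 \<and> nat (- i) + k + 1 \<le> m then c (nat (- i) + k + 1) else 0)"
    by (cases "i \<le> 0") (auto simp: sum.delta)
  finally show ?thesis .
qed

lemma sum_lessThan_shift_if:
  fixes g :: "nat \<Rightarrow> 'a::comm_monoid_add"
  shows "(\<Sum>k<m. if j + k + 1 \<le> m then g (j + k + 1) else 0) = (\<Sum>\<alpha>\<in>{j+1..m}. g \<alpha>)"
proof -
  have "(\<Sum>k<m. if j + k + 1 \<le> m then g (j + k + 1) else 0)
        = sum (\<lambda>k. g (j + k + 1)) {k\<in>{..<m}. j + k + 1 \<le> m}"
    by (rule sum.inter_filter[symmetric]) simp
  also have "\<dots> = sum g ((\<lambda>k. j + k + 1) ` {k\<in>{..<m}. j + k + 1 \<le> m})"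
    by (subst sum.reindex) (auto simp: inj_on_def)
  also have "(\<lambda>k. j + k + 1) ` {k\<in>{..<m}. j + k + 1 \<le> m} = {j+1..m}"
  proof (intro equalityI subsetI)
    fix a assume "a \<in> {j+1..m}"
    hence "a = j + (a - j - 1) + 1 \<and> a - j - 1 \<in> {k\<in>{..<m}. j + k + 1 \<le> m}" by auto
    thus "a \<in> (\<lambda>k. j + k + 1) ` {k\<in>{..<m}. j + k + 1 \<le> m}" by blast
  qed auto
  finally show ?thesis .
qed

text \<open>Because \<open>\<Sum>_\<alpha> (c1 \<alpha> U - c0 \<alpha>) z^\<alpha> = U P - Q = 0\<close>, this sum times \<open>z^(j+1)\<close> equals minus the
  part with \<open>\<alpha> \<le> j\<close>, whose order in \<open>z\<close> is visibly at most \<open>j\<close>.\<close>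

lemma polz_tail_combination_vanishes_below:
  assumes UP: "U * polz c1 m = polz c0 m" and U: "fls_vanishes_below U 1"
  shows "fls_vanishes_below
           (\<Sum>\<alpha>\<in>{j+1..m}. (fls_const (c1 \<alpha>) * U - fls_const (c0 \<alpha>)) * zvar ^ (\<alpha> - j - 1)) 1"
    (is "fls_vanishes_below ?E 1")
proof -
  define h where "h \<alpha> = (fls_const (c1 \<alpha>) * U - fls_const (c0 \<alpha>)) * zvar ^ \<alpha>" for \<alpha>
  have "zvar ^ (j + 1) * ?E = (\<Sum>\<alpha>\<in>{j+1..m}. h \<alpha>)"
    unfolding sum_distrib_left h_def
  proof (intro sum.cong refl)
    fix \<alpha> assume "\<alpha> \<in> {j+1..m}"
    hence "zvar ^ \<alpha> = zvar ^ (j + 1 + (\<alpha> - j - 1))" by simp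
    hence "zvar ^ \<alpha> = zvar ^ (j + 1) * zvar ^ (\<alpha> - j - 1)"
      by (simp only: power_add)
    thus "zvar ^ (j + 1) * ((fls_const (c1 \<alpha>) * U - fls_const (c0 \<alpha>)) * zvar ^ (\<alpha> - j - 1))
          = (fls_const (c1 \<alpha>) * U - fls_const (c0 \<alpha>)) * zvar ^ \<alpha>"
      by (simp add: algebra_simps)
  qed
  also have "\<dots> = - (\<Sum>\<alpha>\<in>{..m} \<inter> {..j}. h \<alpha>)"
  proof -
    have "(\<Sum>\<alpha>\<le>m. h \<alpha>) = U * polz c1 m - polz c0 m"
      unfolding h_def polz_def sum_distrib_left sum_subtractf[symmetric]
      by (intro sum.cong refl) (simp add: algebra_simps)
    moreover have "{..m} - {..j} = {j+1..m}" by auto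
    ultimately have "(\<Sum>\<alpha>\<in>{..m} \<inter> {..j}. h \<alpha>) + (\<Sum>\<alpha>\<in>{j+1..m}. h \<alpha>) = 0"
      using UP sum.Int_Diff[of "{..m}" h "{..j}"] by simp
    thus ?thesis by (simp add: eq_neg_iff_add_eq_0 add.commute)
  qed
  finally have "fls_vanishes_below (zvar ^ (j + 1) * ?E) (1 - int (j + 1))"
  proof (simp only:, intro fls_vanishes_below_uminus fls_vanishes_below_sum)
    fix \<alpha> assume "\<alpha> \<in> {..m} \<inter> {..j}"
    hence "fls_vanishes_below (U * zvar ^ \<alpha>) (1 - int (j + 1))"
      and "fls_vanishes_below (zvar ^ \<alpha>) (1 - int (j + 1))"
      using fls_vanishes_below_mult[OF U fls_vanishes_below_zvar_power, of \<alpha>]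
            fls_vanishes_below_zvar_power[of \<alpha>]
      by (auto elim!: fls_vanishes_below_mono)
    thus "fls_vanishes_below (h \<alpha>) (1 - int (j + 1))"
      unfolding h_def left_diff_distrib mult.assoc
      by (intro fls_vanishes_below_diff fls_vanishes_below_const_mult)
  qed
  thus ?thesis by (rule fls_vanishes_below_zvar_power_mult_cancel)
qed

lemma sum_polz_tail_Res:
  assumes UP: "U * polz c1 m = polz c0 m" and U: "fls_vanishes_below U 1"
      and F: "fls_vanishes_below F 1"
  shows "(\<Sum>k<m. polz_tail c1 m k * fls_const (Res (F * U * zvar ^ k))
                 - polz_tail c0 m k * fls_const (Res (F * zvar ^ k))) = 0"
proof (rule fls_eqI)
  fix i :: int
  have nth: "(\<Sum>k<m. polz_tail c1 m k * fls_const (Res (F * U * zvar ^ k))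
                    - polz_tail c0 m k * fls_const (Res (F * zvar ^ k))) $$ i
             = (\<Sum>k<m. polz_tail c1 m k $$ i * Res (F * U * zvar ^ k)
                       - polz_tail c0 m k $$ i * Res (F * zvar ^ k))"
    by (simp add: fls_nth_sum)
  show "(\<Sum>k<m. polz_tail c1 m k * fls_const (Res (F * U * zvar ^ k))
                - polz_tail c0 m k * fls_const (Res (F * zvar ^ k))) $$ i = 0 $$ i"
  proof (cases "0 < i")
    case True
    thus ?thesis unfolding nth by (simp add: polz_tail_nth)
  next
    case False
    define j where "j = nat (- i)"
    define g where "g \<alpha> = c1 \<alpha> * Res (F * U * zvar ^ (\<alpha> - j - 1)) - c0 \<alpha> * Res (F * zvar ^ (\<alpha> - j - 1))"
      for \<alpha>
    define E where "E = (\<Sum>\<alpha>\<in>{j+1..m}. (fls_const (c1 \<alpha>) * U - fls_const (c0 \<alpha>)) * zvar ^ (\<alpha> - j - 1))"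
    have "(\<Sum>k<m. polz_tail c1 m k $$ i * Res (F * U * zvar ^ k) - polz_tail c0 m k $$ i * Res (F * zvar ^ k))
          = (\<Sum>k<m. if j + k + 1 \<le> m then g (j + k + 1) else 0)"
      using False by (intro sum.cong refl) (simp add: polz_tail_nth g_def j_def[symmetric])
    also have "\<dots> = (\<Sum>\<alpha>\<in>{j+1..m}. g \<alpha>)"
      by (rule sum_lessThan_shift_if)
    also have "\<dots> = Res (F * U * (\<Sum>\<alpha>\<in>{j+1..m}. fls_const (c1 \<alpha>) * zvar ^ (\<alpha> - j - 1)))
                    - Res (F * (\<Sum>\<alpha>\<in>{j+1..m}. fls_const (c0 \<alpha>) * zvar ^ (\<alpha> - j - 1)))"
      unfolding g_def sum_subtractf sum_mult_Res ..
    also have "\<dots> = Res (F * E)"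
      by (simp add: E_def Res_def sum_distrib_left sum_subtractf algebra_simps)
    also have "\<dots> = 0"
      using fls_vanishes_below_mult[OF F polz_tail_combination_vanishes_below[OF UP U, of j]]
      by (simp add: E_def Res_def fls_vanishes_below_def)
    finally show ?thesis unfolding nth by simp
  qed
qed

lemma sum_polz_tail_phi:
  assumes "c1 m \<noteq> 0" "c0 m = 0" "1 \<le> y"
  shows "(\<Sum>k<m. polz_tail c1 m k * fls_const (phi c1 c0 m d k y)
                 - polz_tail c0 m k * fls_const (phi c1 c0 m d k (y - 1))) = 0"
proof -
  define U where "U = polz c0 m / polz c1 m"
  define F where "F = dser d * U ^ (y - 1)"
  have U: "fls_vanishes_below U 1"
    unfolding U_def by (rule polz_divide_polz_vanishes_below[of c1 m c0, OF assms(1,2)])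
  have "U * polz c1 m = polz c0 m"
    using polz_nonzero[of c1 m, OF assms(1)] by (simp add: U_def)
  moreover have "U ^ y = U ^ (y - 1) * U"
    using assms(3) by (cases y) auto
  hence "phi c1 c0 m d k y = Res (F * U * zvar ^ k)" for k
    unfolding phi_def U_def[symmetric] F_def by (simp add: mult.assoc)
  moreover have "phi c1 c0 m d k (y - 1) = Res (F * zvar ^ k)" for k
    unfolding phi_def U_def[symmetric] F_def ..
  ultimately show ?thesis
    using sum_polz_tail_Res[OF _ U dser_mult_power_vanishes_below[OF U]] by (simp add: F_def)
qed

lemma initial_sum_eq:
  assumes "c0 m = 0"
  shows "(\<Sum>\<alpha><m. \<Sum>x<\<alpha>. cst (c0 \<alpha> * f x 0) * Z ^ (\<alpha> - x - 1))
         = fls_const (\<Sum>k<m. polz_tail c0 m k * fls_const (f k 0))"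
proof -
  define T where "T \<alpha> x = fls_const (c0 \<alpha>) * zvar ^ (\<alpha> - x - 1) * fls_const (f x 0)" for \<alpha> x
  have "cst (c0 \<alpha> * f x 0) * Z ^ (\<alpha> - x - 1) = fls_const (T \<alpha> x)" for \<alpha> x
    by (simp add: T_def cst_def Z_def fls_const_power[symmetric] algebra_simps
             flip: fls_const_mult_const)
  hence "(\<Sum>\<alpha><m. \<Sum>x<\<alpha>. cst (c0 \<alpha> * f x 0) * Z ^ (\<alpha> - x - 1)) = fls_const (\<Sum>\<alpha><m. \<Sum>x<\<alpha>. T \<alpha> x)"
    by (simp add: fls_const_sum)
  also have "(\<Sum>\<alpha><m. \<Sum>x<\<alpha>. T \<alpha> x) = (\<Sum>\<alpha>\<le>m. \<Sum>x<\<alpha>. T \<alpha> x)"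
    using assms by (simp add: lessThan_Suc_atMost[symmetric] T_def)
  also have "\<dots> = (\<Sum>x<m. \<Sum>\<alpha>\<in>{Suc x..m}. T \<alpha> x)"
    by (rule sum.nested_swap')
  also have "\<dots> = (\<Sum>k<m. polz_tail c0 m k * fls_const (f k 0))"
    unfolding polz_tail_def sum_distrib_right T_def by simp
  finally show ?thesis .
qed

lemma Phi_nth: "Phi f k $$ n = (if 2 \<le> n then fls_const (f k (nat n - 1)) else 0)"
  using le_nat_iff[of n 2] by (auto simp: Phi_def)

lemma Rk_Phi_identity:
  assumes "c0 m = 0"
    and rec: "\<And>y. 1 \<le> y \<Longrightarrow> (\<Sum>k<m. polz_tail c1 m k * fls_const (f k y)
                                  - polz_tail c0 m k * fls_const (f k (y - 1))) = 0"
  shows "(\<Sum>k<m. Rk c1 c0 m k * Phi f k)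
           - (1 / W) * (\<Sum>\<alpha><m. \<Sum>x<\<alpha>. cst (c0 \<alpha> * f x 0) * Z ^ (\<alpha> - x - 1)) = 0"
proof -
  define S where "S = (\<Sum>k<m. polz_tail c0 m k * fls_const (f k 0))"
  define G where "G = (\<Sum>k<m. fls_const (polz_tail c1 m k) * fls_shift 1 (Phi f k)
                            - fls_const (polz_tail c0 m k) * Phi f k) - fls_shift (-1) (fls_const S)"
  have W_inverse: "1 / W = fls_X"
    by (simp add: W_def fls_inverse_X_inv divide_inverse)
  have "(\<Sum>k<m. Rk c1 c0 m k * Phi f k)
           - (1 / W) * (\<Sum>\<alpha><m. \<Sum>x<\<alpha>. cst (c0 \<alpha> * f x 0) * Z ^ (\<alpha> - x - 1)) = G"
    unfolding G_def W_inverse initial_sum_eq[of c0 m f, OF assms(1)] S_def[symmetric] fls_X_times_conv_shift(1)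
    by (intro arg_cong2[where f=minus] refl sum.cong)
       (simp add: Rk_eq_polz_tail W_def fls_X_inv_times_conv_shift(1)[symmetric] algebra_simps)
  also have "G = 0"
  proof (rule fls_eqI)
    fix n :: int
    have G_nth: "G $$ n = (\<Sum>k<m. polz_tail c1 m k * Phi f k $$ (n + 1) - polz_tail c0 m k * Phi f k $$ n)
                          - (if n = 1 then S else 0)"
      by (simp add: G_def fls_nth_sum)
    show "G $$ n = 0 $$ n"
    proof (cases "1 \<le> n")
      case True
      have "G $$ n = (\<Sum>k<m. polz_tail c1 m k * fls_const (f k (nat n))
                            - polz_tail c0 m k * fls_const (f k (nat n - 1)))"
      proof (cases "n = 1")
        case True
        thus ?thesis unfolding G_nth by (simp add: Phi_nth S_def sum_subtractf)
      next
        case False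
        hence "nat (n + 1) - 1 = nat n" "2 \<le> n" using \<open>1 \<le> n\<close> by auto
        thus ?thesis unfolding G_nth using False by (simp add: Phi_nth)
      qed
      also have "\<dots> = 0"
        using rec[of "nat n"] True by simp
      finally show ?thesis by simp
    qed (simp add: G_nth Phi_nth)
  qed
  finally show ?thesis .
qed

theorem mainTheorem4:
  fixes d c1 c0 :: "nat \<Rightarrow> complex" and m :: nat
  assumes "m \<ge> 1" and "c1 m \<noteq> 0" and "c0 m = 0"
  shows "(\<Sum>k<m. Rk c1 c0 m k * Phi (phi c1 c0 m d) k)
           - (1 / W) * (\<Sum>\<alpha><m. \<Sum>x<\<alpha>. cst (c0 \<alpha> * phi c1 c0 m d x 0) * Z ^ (\<alpha> - x - 1)) = 0
       \<and> (\<forall>r. cauchy_sol c1 c0 m (phi c1 c0 m d) r \<longrightarrow>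
              genD r = fls_const (polz c1 m) * fls_const (dser d)
                       / (fls_const (polz c1 m) * W - fls_const (polz c0 m)))"
  using Rk_Phi_identity[of c0 m c1 "phi c1 c0 m d", OF assms(3) sum_polz_tail_phi[of c1 m c0, OF assms(2,3)]]
        genD_cauchy_sol[of c1 m c0, OF assms(2,3)]
  by blast

end
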